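(* Let $X$ be as in the standing setting with skeleton $X_1,\dots,X_k$. Suppose $x\in X$ lies in no $\operatorname{span}X_l$ and $x\in\operatorname{pos}\{x_i,x_j\}$ with $x_i\in X_i$, $x_j\in X_j$, $i\ne j$. If $y\in X\setminus X_i$ lies in $\operatorname{span}X_i$, then the support $S_y$ of $y$ does not contain $x_i$.
   Context: Standing setting: $X\subset\mathbb R^n\setminus\{0\}$ is a finite set such that $0$ lies in the interior of $\operatorname{conv}X$, no element of $X$ is a positive multiple of another, and every $n+1$ points of $X$ are in good position. A finite set $A$ is in conical position if $0\notin\operatorname{conv}A$ and no point of $A$ lies in the positive hull (set of nonnegative linear combinations, denoted $\operatorname{pos}$) of the other points; it is in good position otherwise. A skeleton of $X$ is a collection of pairwise disjoint subsets $X_1,\dots,X_k\subseteq X$ such that each $X_i$ is the vertex set of a simplex whose relative interior contains $0$ and $\mathbb R^n=\operatorname{span}X_1\oplus\cdots\oplus\operatorname{span}X_k$. For a nonzero $y\in\operatorname{span}X_i$, its support $S_y$ is the minimal subset of $X_i$ whose positive hull contains $y$. *)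

theory Defs
  imports "HOL-Analysis.Analysis"
begin

definition pos :: "'a::real_vector set \<Rightarrow> 'a set" where
  "pos A = {(\<Sum>a\<in>A. c a *\<^sub>R a) | c. \<forall>a\<in>A. 0 \<le> c a}"

definition conical_position :: "'a::real_vector set \<Rightarrow> bool" where
  "conical_position A \<longleftrightarrow> 0 \<notin> convex hull A \<and> (\<forall>a\<in>A. a \<notin> pos (A - {a}))"

definition good_position :: "'a::real_vector set \<Rightarrow> bool" where
  "good_position A \<longleftrightarrow> \<not> conical_position A"

definition standing_setting :: "'a::euclidean_space set \<Rightarrow> bool" where
  "standing_setting X \<longleftrightarrow>
     finite X \<and> 0 \<notin> X \<and> 0 \<in> interior (convex hull X) \<and>
     (\<forall>x\<in>X. \<forall>y\<in>X. x \<noteq> y \<longrightarrow> \<not> (\<exists>c>0. y = c *\<^sub>R x)) \<and>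
     (\<forall>A. A \<subseteq> X \<and> card A = DIM('a) + 1 \<longrightarrow> good_position A)"

definition direct_sum_decomposition :: "nat \<Rightarrow> (nat \<Rightarrow> 'a::real_vector set) \<Rightarrow> bool" where
  "direct_sum_decomposition k V \<longleftrightarrow>
     (\<forall>v. \<exists>!u. (\<forall>i<k. u i \<in> V i) \<and> (\<forall>i. k \<le> i \<longrightarrow> u i = 0) \<and> v = (\<Sum>i<k. u i))"

text \<open>A skeleton X_0,...,X_(k-1) of X (indexed by i < k).\<close>
definition skeleton :: "'a::euclidean_space set \<Rightarrow> nat \<Rightarrow> (nat \<Rightarrow> 'a set) \<Rightarrow> bool" where
  "skeleton X k Xs \<longleftrightarrow>
     (\<forall>i<k. Xs i \<subseteq> X) \<and>
     (\<forall>i<k. \<forall>j<k. i \<noteq> j \<longrightarrow> Xs i \<inter> Xs j = {}) \<and>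
     (\<forall>i<k. \<not> affine_dependent (Xs i) \<and> 0 \<in> rel_interior (convex hull (Xs i))) \<and>
     direct_sum_decomposition k (\<lambda>i. span (Xs i))"

definition is_support :: "'a::real_vector set \<Rightarrow> 'a \<Rightarrow> 'a set \<Rightarrow> bool" where
  "is_support Xi y S \<longleftrightarrow> S \<subseteq> Xi \<and> y \<in> pos S \<and> (\<forall>T. T \<subset> S \<longrightarrow> y \<notin> pos T)"

end

theory Submission
  imports Defs
begin

(* Write y = \<Sum>t\<in>S. \<mu> t *\<^sub>R t with all \<mu> t > 0; minimality of the support makes S
   linearly independent, and S \<noteq> {xi} because no point of X is a positive multiple of
   another. If xi \<in> S, substitute xi = (x - b xj) / a, where x = a xi + b xj with a, b > 0.
   The set obtained from S by replacing xi with x and adding xj is still independent (xj lies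
   outside span (Xs i)), and in it y has two positive coefficients (at x and on S - {xi}) and a
   negative one (at xj). Extending this set to a basis B \<subseteq> X, the DIM + 1 points
   insert y B are in conical position, against the standing assumption. *)

lemma span_eq_UNIV_if_zero_in_interior_convex_hull:
  fixes X :: "'a::euclidean_space set"
  assumes "0 \<in> interior (convex hull X)"
  shows "span X = UNIV"
proof -
  have "aff_dim X = DIM('a)"
    using assms aff_dim_nonempty_interior[of "convex hull X"] aff_dim_convex_hull
    by (metis empty_iff)
  moreover have "0 \<in> affine hull X"
    using assms interior_subset convex_hull_subset_affine_hull by blast
  ultimately show ?thesis
    using aff_dim_eq_full affine_hull_span_0 by metis
qed

lemma independent_coefficients_unique:
  assumes "finite B" "independent B"
    and "(\<Sum>t\<in>B. f t *\<^sub>R t) = (\<Sum>t\<in>B. g t *\<^sub>R t)"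
  shows "\<forall>t\<in>B. f t = g t"
proof -
  have "(\<Sum>t\<in>B. (f t - g t) *\<^sub>R t) = 0"
    using assms(3) by (simp add: scaleR_diff_left sum_subtractf)
  then show ?thesis
    using assms(1,2) independent_explicit_finite_subsets by fastforce
qed

lemma sum_indicator_scaleR:
  fixes z :: "'a::real_vector"
  assumes "finite B" "z \<in> B"
  shows "(\<Sum>t\<in>B. (if t = z then 1 else 0) *\<^sub>R t) = z"
proof -
  have "(\<Sum>t\<in>B. (if t = z then 1 else 0) *\<^sub>R t) = (\<Sum>t\<in>B. if t = z then t else 0)"
    by (rule sum.cong) simp_all
  then show ?thesis
    using assms by simp
qed

lemma mem_pos:
  assumes "finite A" "a \<in> A"
  shows "a \<in> pos A"
proof -
  have "a = (\<Sum>t\<in>A. (if t = a then 1 else 0) *\<^sub>R t)"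
    using sum_indicator_scaleR[OF assms] by simp
  then show ?thesis
    unfolding pos_def by force
qed

lemma notin_pos_if_negative_coefficient:
  assumes "finite B" "independent B" "y = (\<Sum>t\<in>B. c t *\<^sub>R t)" "t \<in> B" "c t < 0"
  shows "y \<notin> pos B"
proof
  assume "y \<in> pos B"
  then obtain d where "y = (\<Sum>t\<in>B. d t *\<^sub>R t)" "\<forall>t\<in>B. 0 \<le> d t"
    unfolding pos_def by blast
  then show False
    using assms independent_coefficients_unique[of B c d] by fastforce
qed

lemma zero_notin_convex_hull_insert_if_positive_coefficient:
  assumes "finite B" "independent B" "y = (\<Sum>t\<in>B. c t *\<^sub>R t)" "y \<notin> B"
    and "t \<in> B" "c t > 0"
  shows "0 \<notin> convex hull (insert y B)"
proof
  assume "0 \<in> convex hull (insert y B)"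
  then obtain w where w: "\<forall>s\<in>insert y B. 0 \<le> w s" "sum w (insert y B) = 1"
    "(\<Sum>s\<in>insert y B. w s *\<^sub>R s) = 0"
    using convex_hull_finite[of "insert y B"] assms(1) by auto
  have "(\<Sum>s\<in>B. (w y * c s + w s) *\<^sub>R s) = w y *\<^sub>R y + (\<Sum>s\<in>B. w s *\<^sub>R s)"
    by (simp add: assms(3) scaleR_sum_right sum.distrib scaleR_add_left)
  also have "\<dots> = (\<Sum>s\<in>B. 0 *\<^sub>R s)"
    using w(3) assms(1,4) by simp
  finally have coeffs: "\<forall>s\<in>B. w y * c s + w s = 0"
    by (rule independent_coefficients_unique[OF assms(1,2)])
  have "w y * c t = 0"
    using coeffs w(1) assms(5,6) by (smt (verit) insert_iff zero_le_mult_iff)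
  then have "w y = 0"
    using assms(6) by simp
  then have "sum w (insert y B) = 0"
    using coeffs assms(1,4) by simp
  then show False
    using w(2) by simp
qed

lemma notin_pos_insert_if_other_positive_coefficient:
  assumes "finite B" "independent B" "y = (\<Sum>t\<in>B. c t *\<^sub>R t)" "y \<notin> B"
    and "z \<in> B" "t \<in> B" "t \<noteq> z" "c t > 0"
  shows "z \<notin> pos (insert y (B - {z}))"
proof
  assume "z \<in> pos (insert y (B - {z}))"
  then obtain w where w: "\<forall>s\<in>insert y (B - {z}). 0 \<le> w s"
    "z = (\<Sum>s\<in>insert y (B - {z}). w s *\<^sub>R s)"
    unfolding pos_def by blast
  define g where "g s = (if s = z then 0 else w s)" for s
  have "(\<Sum>s\<in>B. (w y * c s + g s) *\<^sub>R s) = w y *\<^sub>R y + (\<Sum>s\<in>B. g s *\<^sub>R s)"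
    by (simp add: assms(3) scaleR_sum_right sum.distrib scaleR_add_left)
  also have "(\<Sum>s\<in>B. g s *\<^sub>R s) = (\<Sum>s\<in>B - {z}. w s *\<^sub>R s)"
    using assms(1,5) by (simp add: g_def sum.remove)
  also have "w y *\<^sub>R y + \<dots> = (\<Sum>s\<in>B. (if s = z then 1 else 0) *\<^sub>R s)"
    using w(2) assms(1,4,5) by (simp add: sum_indicator_scaleR)
  finally have coeffs: "\<forall>s\<in>B. w y * c s + g s = (if s = z then 1 else 0)"
    by (rule independent_coefficients_unique[OF assms(1,2)])
  have "w y * c t = 0"
    using coeffs w(1) assms(6-8) unfolding g_def
    by (smt (verit) DiffI insert_iff singletonD zero_le_mult_iff)
  then have "w y = 0"
    using assms(8) by simp
  then show False
    using coeffs assms(5) unfolding g_def by force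
qed

lemma conical_position_insert_if_mixed_coefficients:
  assumes "finite B" "independent B" "y = (\<Sum>t\<in>B. c t *\<^sub>R t)"
    and "t\<^sub>1 \<in> B" "t\<^sub>2 \<in> B" "t\<^sub>1 \<noteq> t\<^sub>2" "c t\<^sub>1 > 0" "c t\<^sub>2 > 0"
    and "t\<^sub>3 \<in> B" "c t\<^sub>3 < 0"
  shows "y \<notin> B" "conical_position (insert y B)"
proof -
  have y_notin_pos: "y \<notin> pos B"
    using notin_pos_if_negative_coefficient[OF assms(1-3,9,10)] .
  then show "y \<notin> B"
    using mem_pos assms(1) by blast
  have "z \<notin> pos (insert y B - {z})" if "z \<in> insert y B" for z
  proof (cases "z = y")
    case True
    then show ?thesis
      using y_notin_pos \<open>y \<notin> B\<close> by simp
  next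
    case False
    obtain t where "t \<in> B" "t \<noteq> z" "c t > 0"
      using assms(4-8) by (cases "z = t\<^sub>1") auto
    then have "z \<notin> pos (insert y (B - {z}))"
      using notin_pos_insert_if_other_positive_coefficient[OF assms(1-3) \<open>y \<notin> B\<close>] that False
      by simp
    then show ?thesis
      using False by (simp add: insert_Diff_if)
  qed
  then show "conical_position (insert y B)"
    unfolding conical_position_def
    using zero_notin_convex_hull_insert_if_positive_coefficient[OF assms(1-3) \<open>y \<notin> B\<close> assms(4,7)]
    by blast
qed

lemma direct_sum_decomposition_Int:
  assumes "direct_sum_decomposition k V" "i < k" "j < k" "i \<noteq> j" "\<forall>l. 0 \<in> V l"
  shows "V i \<inter> V j = {0}"
proof -
  have "v = 0" if "v \<in> V i" "v \<in> V j" for v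
  proof -
    define decomposes where
      "decomposes u \<longleftrightarrow> (\<forall>l<k. u l \<in> V l) \<and> (\<forall>l. k \<le> l \<longrightarrow> u l = 0) \<and> v = (\<Sum>l<k. u l)"
      for u
    define u where "u l = (if l = i then v else 0)" for l
    define u' where "u' l = (if l = j then v else 0)" for l
    have "\<exists>!u. decomposes u"
      using assms(1)[unfolded direct_sum_decomposition_def, rule_format, of v]
      unfolding decomposes_def .
    moreover have "decomposes u" "decomposes u'"
      using assms(2,3,5) that unfolding decomposes_def u_def u'_def by (auto simp: sum.delta)
    ultimately have "u i = u' i"
      by (auto elim!: ex1E)
    then show "v = 0"
      using assms(4) by (simp add: u_def u'_def)
  qed
  then show ?thesis
    using assms(5) by blast
qed

lemma skeleton_span_Int:
  assumes "skeleton X k Xs" "i < k" "j < k" "i \<noteq> j"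
  shows "span (Xs i) \<inter> span (Xs j) = {0}"
  using direct_sum_decomposition_Int[of k "\<lambda>l. span (Xs l)"] assms
  unfolding skeleton_def by (simp add: span_zero)

lemma pos_pair_positive_coefficients:
  assumes "x \<in> pos {u, v}" "subspace U" "subspace V" "u \<in> U" "v \<in> V" "x \<notin> U" "x \<notin> V"
  obtains a b where "a > 0" "b > 0" "x = a *\<^sub>R u + b *\<^sub>R v"
proof -
  obtain c where c: "x = (\<Sum>t\<in>{u, v}. c t *\<^sub>R t)" "\<forall>t\<in>{u, v}. 0 \<le> c t"
    using assms(1) unfolding pos_def by blast
  have "u \<noteq> v"
  proof
    assume "u = v"
    then have "x = c u *\<^sub>R u"
      using c(1) by simp
    then show False
      using assms(2,4,6) subspace_mul by blast
  qed
  then have x: "x = c u *\<^sub>R u + c v *\<^sub>R v"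
    using c(1) by simp
  have "c u \<noteq> 0"
  proof
    assume "c u = 0"
    then have "x = c v *\<^sub>R v"
      using x by simp
    then show False
      using assms(3,5,7) subspace_mul by blast
  qed
  moreover have "c v \<noteq> 0"
  proof
    assume "c v = 0"
    then have "x = c u *\<^sub>R u"
      using x by simp
    then show False
      using assms(2,4,6) subspace_mul by blast
  qed
  ultimately show ?thesis
    using that[of "c u" "c v"] x c(2) by (simp add: order_less_le)
qed

lemma pos_remove_zero_coefficient:
  assumes "finite S" "\<forall>t\<in>S. 0 \<le> \<nu> t" "t\<^sub>0 \<in> S" "\<nu> t\<^sub>0 = 0"
  shows "(\<Sum>t\<in>S. \<nu> t *\<^sub>R t) \<in> pos (S - {t\<^sub>0})"
proof -
  have "(\<Sum>t\<in>S. \<nu> t *\<^sub>R t) = (\<Sum>t\<in>S - {t\<^sub>0}. \<nu> t *\<^sub>R t)"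
    using assms(1,3,4) by (simp add: sum.remove)
  then show ?thesis
    unfolding pos_def using assms(2) by auto
qed

lemma minimal_pos_positive_coefficients:
  assumes "finite S" "y \<in> pos S" "\<forall>T. T \<subset> S \<longrightarrow> y \<notin> pos T"
  obtains \<mu> where "\<forall>t\<in>S. \<mu> t > 0" "y = (\<Sum>t\<in>S. \<mu> t *\<^sub>R t)"
proof -
  obtain \<mu> where \<mu>: "y = (\<Sum>t\<in>S. \<mu> t *\<^sub>R t)" "\<forall>t\<in>S. 0 \<le> \<mu> t"
    using assms(2) unfolding pos_def by blast
  have "\<mu> t \<noteq> 0" if "t \<in> S" for t
  proof
    assume "\<mu> t = 0"
    then have "y \<in> pos (S - {t})"
      using pos_remove_zero_coefficient[OF assms(1) \<mu>(2) that] \<mu>(1) by simp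
    moreover have "S - {t} \<subset> S"
      using that by blast
    ultimately show False
      using assms(3) by blast
  qed
  then have "\<forall>t\<in>S. \<mu> t > 0"
    using \<mu>(2) by (simp add: order.strict_iff_order)
  then show ?thesis
    using that \<mu>(1) by blast
qed

text \<open>Caratheodory's argument: subtracting a suitable multiple of a linear dependence
  from the positive coefficients makes one of them vanish.\<close>
lemma minimal_pos_independent:
  assumes "finite S" "y \<in> pos S" "\<forall>T. T \<subset> S \<longrightarrow> y \<notin> pos T"
  shows "independent S"
proof (rule ccontr)
  obtain \<mu> where \<mu>: "\<forall>t\<in>S. \<mu> t > 0" "y = (\<Sum>t\<in>S. \<mu> t *\<^sub>R t)"
    using minimal_pos_positive_coefficients[OF assms] .
  assume "\<not> independent S"
  then obtain u' v where v: "v \<in> S" "u' v \<noteq> 0" "(\<Sum>t\<in>S. u' t *\<^sub>R t) = 0"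
    using dependent_finite[OF assms(1)] by blast
  define u where "u t = u' t / u' v" for t
  have "(\<Sum>t\<in>S. u t *\<^sub>R t) = inverse (u' v) *\<^sub>R (\<Sum>t\<in>S. u' t *\<^sub>R t)"
    by (simp add: u_def scaleR_sum_right divide_inverse_commute)
  then have u_sum: "(\<Sum>t\<in>S. u t *\<^sub>R t) = 0"
    using v(3) by simp
  define P where "P = {t\<in>S. u t > 0}"
  have P: "finite P" "v \<in> P"
    using assms(1) v by (auto simp: P_def u_def)
  define \<theta> where "\<theta> = Min ((\<lambda>t. \<mu> t / u t) ` P)"
  obtain t\<^sub>0 where t\<^sub>0: "t\<^sub>0 \<in> P" "\<theta> = \<mu> t\<^sub>0 / u t\<^sub>0"
    using Min_in[of "(\<lambda>t. \<mu> t / u t) ` P"] P unfolding \<theta>_def by blast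
  have \<theta>_pos: "\<theta> > 0"
    using t\<^sub>0 \<mu>(1) by (simp add: P_def)
  define \<nu> where "\<nu> t = \<mu> t - \<theta> * u t" for t
  have "0 \<le> \<nu> t" if "t \<in> S" for t
  proof (cases "u t > 0")
    case True
    then have "\<theta> \<le> \<mu> t / u t"
      using P that unfolding \<theta>_def P_def by simp
    then show ?thesis
      using True by (simp add: \<nu>_def field_simps)
  next
    case False
    then show ?thesis
      using \<theta>_pos \<mu>(1) that by (simp add: \<nu>_def) (smt (verit) mult_nonneg_nonpos)
  qed
  moreover have "\<nu> t\<^sub>0 = 0"
    using t\<^sub>0 by (simp add: \<nu>_def P_def)
  moreover have "(\<Sum>t\<in>S. \<nu> t *\<^sub>R t) = (\<Sum>t\<in>S. \<mu> t *\<^sub>R t) - \<theta> *\<^sub>R (\<Sum>t\<in>S. u t *\<^sub>R t)"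
    by (simp add: \<nu>_def scaleR_diff_left sum_subtractf scaleR_sum_right)
  then have "(\<Sum>t\<in>S. \<nu> t *\<^sub>R t) = y"
    using \<mu>(2) u_sum by simp
  ultimately have "y \<in> pos (S - {t\<^sub>0})"
    using pos_remove_zero_coefficient[OF assms(1)] t\<^sub>0(1) unfolding P_def by force
  then show False
    using assms(3) t\<^sub>0(1) unfolding P_def by blast
qed

lemma is_support_positive_independent:
  assumes "is_support U y S" "finite U"
  obtains \<mu> where "S \<subseteq> U" "finite S" "independent S" "\<forall>t\<in>S. \<mu> t > 0"
    "y = (\<Sum>t\<in>S. \<mu> t *\<^sub>R t)"
proof -
  have S: "S \<subseteq> U" "finite S" "y \<in> pos S" "\<forall>T. T \<subset> S \<longrightarrow> y \<notin> pos T"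
    using assms finite_subset unfolding is_support_def by blast+
  then show ?thesis
    using that minimal_pos_positive_coefficients[OF S(2-4)] minimal_pos_independent[OF S(2-4)]
    by blast
qed

lemma independent_insert_exchange:
  assumes "independent (insert u T)" "u \<notin> T" "a \<noteq> 0" "v - a *\<^sub>R u \<in> span T"
  shows "independent (insert v T)"
proof -
  have T: "independent T" "u \<notin> span T"
    using assms(1,2) by (simp_all add: independent_insert)
  have "v \<notin> span T"
  proof
    assume "v \<in> span T"
    then have "a *\<^sub>R u \<in> span T"
      using assms(4) span_diff by fastforce
    then have "inverse a *\<^sub>R a *\<^sub>R u \<in> span T"
      by (rule span_mul)
    then show False
      using T(2) assms(3) by simp
  qed
  then show ?thesis
    using T(1) by (auto simp: independent_insert span_base)
qed

lemma independent_exchange_outside_subspace: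
  assumes "independent S" "u \<in> S" "S \<subseteq> U" "subspace U" "w \<notin> U"
    and "a \<noteq> 0" "x = a *\<^sub>R u + b *\<^sub>R w"
  shows "independent (insert x (insert w (S - {u})))"
proof -
  have "w \<notin> span S"
    using assms(3-5) span_minimal by blast
  then have "independent (insert w S)"
    using assms(1) by (auto simp: independent_insert dest: span_base)
  moreover have "insert u (insert w (S - {u})) = insert w S"
    using assms(2) by auto
  ultimately have "independent (insert u (insert w (S - {u})))"
    by simp
  moreover have "u \<notin> insert w (S - {u})"
    using assms(2,3,5) by auto
  moreover have "x - a *\<^sub>R u \<in> span (insert w (S - {u}))"
    using assms(7) by (simp add: span_base span_mul)
  ultimately show ?thesis
    using independent_insert_exchange assms(6) by blast
qed

lemma extend_independent_to_basis_within:
  fixes X :: "'a::euclidean_space set"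
  assumes "span X = UNIV" "L \<subseteq> X" "independent L"
  obtains B where "L \<subseteq> B" "B \<subseteq> X" "independent B" "finite B" "card B = DIM('a)"
proof -
  obtain B where B: "L \<subseteq> B" "B \<subseteq> X" "independent B" "X \<subseteq> span B"
    using maximal_independent_subset_extend[OF assms(2,3)] by blast
  then have "span B = UNIV"
    using assms(1) span_minimal[of X "span B"] by auto
  then have "card B = DIM('a)"
    using dim_eq_card_independent[OF B(3)] dim_span[of B] by simp
  then show ?thesis
    using that B independent_bound by blast
qed

lemma conical_position_after_support_exchange:
  assumes "finite B" "independent B" "insert x (insert w S') \<subseteq> B"
    and "x \<noteq> w" "x \<notin> S'" "w \<notin> S'" "S' \<noteq> {}"
    and "a > 0" "b > 0" "x = a *\<^sub>R u + b *\<^sub>R w"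
    and "m > 0" "\<forall>t\<in>S'. \<mu> t > 0" "y = m *\<^sub>R u + (\<Sum>t\<in>S'. \<mu> t *\<^sub>R t)"
  shows "y \<notin> B" "conical_position (insert y B)"
proof -
  define c where
    "c t = (if t = x then m / a else if t = w then - (m * b / a) else if t \<in> S' then \<mu> t else 0)"
    for t
  have "finite S'"
    using assms(3) finite_subset[OF _ assms(1)] by simp
  have "(\<Sum>t\<in>B. c t *\<^sub>R t) = (\<Sum>t\<in>insert x (insert w S'). c t *\<^sub>R t)"
    by (rule sum.mono_neutral_right[OF assms(1,3)]) (simp add: c_def)
  also have "\<dots> = c x *\<^sub>R x + c w *\<^sub>R w + (\<Sum>t\<in>S'. c t *\<^sub>R t)"
    using \<open>finite S'\<close> assms(4-6) by (simp add: add.assoc)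
  also have "c x *\<^sub>R x + c w *\<^sub>R w = (m / a) *\<^sub>R (a *\<^sub>R u + b *\<^sub>R w) - (m * b / a) *\<^sub>R w"
    using assms(4,10) by (simp add: c_def)
  also have "\<dots> = m *\<^sub>R u"
    using assms(8) by (simp add: scaleR_add_right)
  also have "(\<Sum>t\<in>S'. c t *\<^sub>R t) = (\<Sum>t\<in>S'. \<mu> t *\<^sub>R t)"
  proof (rule sum.cong[OF refl])
    fix t
    assume "t \<in> S'"
    then have "t \<noteq> x" "t \<noteq> w"
      using assms(5,6) by auto
    then show "c t *\<^sub>R t = \<mu> t *\<^sub>R t"
      using \<open>t \<in> S'\<close> by (simp add: c_def)
  qed
  finally have y: "y = (\<Sum>t\<in>B. c t *\<^sub>R t)"
    using assms(13) by simp
  obtain s where "s \<in> S'"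
    using assms(7) by blast
  moreover have "x \<in> B" "s \<in> B" "w \<in> B" "s \<noteq> x" "s \<noteq> w"
    using \<open>s \<in> S'\<close> assms(3,5,6) by auto
  moreover have "c x > 0" "c s > 0" "c w < 0"
    using \<open>s \<in> S'\<close> \<open>s \<noteq> x\<close> \<open>s \<noteq> w\<close> assms(4,8,9,11,12) by (simp_all add: c_def)
  ultimately show "y \<notin> B" "conical_position (insert y B)"
    using conical_position_insert_if_mixed_coefficients[OF assms(1,2) y] by blast+
qed

lemma conical_subset_of_support_exchange:
  fixes X :: "'a::euclidean_space set"
  assumes "span X = UNIV" "insert y (insert x (insert w S)) \<subseteq> X"
    and "finite S" "independent S" "u \<in> S" "S \<noteq> {u}" "S \<subseteq> U" "subspace U"
    and "w \<notin> U" "x \<notin> U" "x \<noteq> w"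
    and "a > 0" "b > 0" "x = a *\<^sub>R u + b *\<^sub>R w"
    and "\<forall>t\<in>S. \<mu> t > 0" "y = (\<Sum>t\<in>S. \<mu> t *\<^sub>R t)"
  obtains A where "A \<subseteq> X" "card A = DIM('a) + 1" "conical_position A"
proof -
  define S' where "S' = S - {u}"
  have "independent (insert x (insert w S'))"
    using independent_exchange_outside_subspace[OF assms(4,5,7,8,9) _ assms(14)] assms(12)
    unfolding S'_def by simp
  moreover have "insert x (insert w S') \<subseteq> X"
    using assms(2) unfolding S'_def by blast
  ultimately obtain B where B: "insert x (insert w S') \<subseteq> B" "B \<subseteq> X" "independent B"
      "finite B" "card B = DIM('a)"
    using extend_independent_to_basis_within[OF assms(1)] by blast
  have "y = \<mu> u *\<^sub>R u + (\<Sum>t\<in>S'. \<mu> t *\<^sub>R t)"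
    using assms(16) sum.remove[OF assms(3,5)] unfolding S'_def by simp
  moreover have "x \<notin> S'" "w \<notin> S'" "S' \<noteq> {}"
    using assms(5-7,9,10) unfolding S'_def by auto
  moreover have "\<mu> u > 0" "\<forall>t\<in>S'. \<mu> t > 0"
    using assms(5,15) unfolding S'_def by auto
  ultimately have "y \<notin> B" "conical_position (insert y B)"
    using conical_position_after_support_exchange[OF B(4,3,1) assms(11) _ _ _ assms(12-14)]
    by blast+
  moreover have "insert y B \<subseteq> X" "card (insert y B) = DIM('a) + 1"
    using assms(2) B(2,4,5) \<open>y \<notin> B\<close> by auto
  ultimately show ?thesis
    using that by blast
qed

theorem proposition5p4:
  fixes X :: "'a::euclidean_space set" and Xs :: "nat \<Rightarrow> 'a set"
    and k i j :: nat and x xi xj y :: 'a and S :: "'a set"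
  assumes "standing_setting X"
    and "skeleton X k Xs"
    and "x \<in> X"
    and "\<forall>l<k. x \<notin> span (Xs l)"
    and "i < k" and "j < k" and "i \<noteq> j"
    and "xi \<in> Xs i" and "xj \<in> Xs j"
    and "x \<in> pos {xi, xj}"
    and "y \<in> X - Xs i"
    and "y \<in> span (Xs i)"
    and "is_support (Xs i) y S"
  shows "xi \<notin> S"
proof
  assume "xi \<in> S"
  have X: "finite X" "0 \<notin> X" "0 \<in> interior (convex hull X)"
    "\<forall>u\<in>X. \<forall>v\<in>X. u \<noteq> v \<longrightarrow> \<not> (\<exists>c>0. v = c *\<^sub>R u)"
    "\<forall>A. A \<subseteq> X \<and> card A = DIM('a) + 1 \<longrightarrow> good_position A"
    using assms(1) unfolding standing_setting_def by blast+
  have Xs: "Xs i \<subseteq> X" "xj \<in> X"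
    using assms(2,5,6,9) unfolding skeleton_def by blast+
  have xj: "xj \<notin> span (Xs i)"
    using skeleton_span_Int[OF assms(2,5-7)] span_base[OF assms(9)] Xs(2) X(2)
    by (metis IntI singletonD)
  have x: "x \<notin> span (Xs i)" "x \<notin> span (Xs j)"
    using assms(4-6) by auto
  obtain a b where ab: "a > 0" "b > 0" "x = a *\<^sub>R xi + b *\<^sub>R xj"
    using pos_pair_positive_coefficients[OF assms(10) subspace_span subspace_span
        span_base[OF assms(8)] span_base[OF assms(9)] x] .
  obtain \<mu> where S: "S \<subseteq> Xs i" "finite S" "independent S" and
    \<mu>: "\<forall>t\<in>S. \<mu> t > 0" "y = (\<Sum>t\<in>S. \<mu> t *\<^sub>R t)"
    using is_support_positive_independent[OF assms(13) finite_subset[OF Xs(1) X(1)]] .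
  have "S \<noteq> {xi}"
  proof
    assume "S = {xi}"
    then have "\<exists>c>0. y = c *\<^sub>R xi"
      using \<mu> by auto
    moreover have "xi \<in> X" "y \<in> X" "xi \<noteq> y"
      using assms(8,11) Xs(1) by auto
    ultimately show False
      using X(4) by blast
  qed
  then obtain A where "A \<subseteq> X" "card A = DIM('a) + 1" "conical_position A"
    using conical_subset_of_support_exchange[OF
        span_eq_UNIV_if_zero_in_interior_convex_hull[OF X(3)] _ S(2,3)
        \<open>xi \<in> S\<close> _ _ subspace_span xj x(1) _ ab \<mu>]
      assms(3,11) Xs S(1) span_superset[of "Xs i"] x(2) span_base[OF assms(9)]
    by blast
  then show False
    using X(5) unfolding good_position_def by blast
qed

end
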